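(* The natural map from the monoid $B_n^+$ to $B_n$ is injective: if two positive words in the band generators represent the same element of $B_n$, then they are positively equivalent.
   Context: $B_n$ is the $n$-string braid group with band generators $a_{ts}$ ($n\ge t>s\ge1$), where $a_{ts}=(\sigma_{t-1}\cdots\sigma_{s+1})\sigma_s(\sigma_{s+1}^{-1}\cdots\sigma_{t-1}^{-1})$. The band relations are: (R1) $a_{ts}a_{rq}=a_{rq}a_{ts}$ if $(t-r)(t-q)(s-r)(s-q)>0$; (R2) $a_{ts}a_{sr}=a_{tr}a_{ts}=a_{sr}a_{tr}$ for $n\ge t>s>r\ge1$. A positive word is a word in positive powers of the $a_{ts}$. Two positive words are positively equivalent if one can be transformed into the other by a finite sequence of single direct applications of relations (R1), (R2) to subwords. $B_n^+$ is the monoid with generators $a_{ts}$ and relations (R1), (R2), i.e. positive words modulo positive equivalence. *)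

theory Defs
  imports Main
begin

text \<open>A letter (i, True) stands for sigma_i, (i, False) for sigma_i inverse, 1 <= i <= n-1.\<close>
type_synonym aletter = "nat \<times> bool"

definition valid_aletter :: "nat \<Rightarrow> aletter \<Rightarrow> bool" where
  "valid_aletter n x \<longleftrightarrow> 1 \<le> fst x \<and> fst x < n"

fun ainv :: "aletter \<Rightarrow> aletter" where
  "ainv (i, b) = (i, \<not> b)"

definition sg :: "nat \<Rightarrow> aletter" where "sg i = (i, True)"
definition sgi :: "nat \<Rightarrow> aletter" where "sgi i = (i, False)"

inductive braid_eq :: "nat \<Rightarrow> aletter list \<Rightarrow> aletter list \<Rightarrow> bool" for n where
  refl: "braid_eq n w w"
| sym: "braid_eq n u v \<Longrightarrow> braid_eq n v u"
| trans: "braid_eq n u v \<Longrightarrow> braid_eq n v w \<Longrightarrow> braid_eq n u w"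
| ctx: "braid_eq n u v \<Longrightarrow> braid_eq n (p @ u @ q) (p @ v @ q)"
| cancel: "valid_aletter n x \<Longrightarrow> braid_eq n [x, ainv x] []"
| comm: "1 \<le> i \<Longrightarrow> i < n \<Longrightarrow> 1 \<le> j \<Longrightarrow> j < n \<Longrightarrow> i + 2 \<le> j \<Longrightarrow>
           braid_eq n [sg i, sg j] [sg j, sg i]"
| braid: "1 \<le> i \<Longrightarrow> i + 1 < n \<Longrightarrow>
           braid_eq n [sg i, sg (i+1), sg i] [sg (i+1), sg i, sg (i+1)]"

text \<open>A band generator a_{ts} is represented by the pair (t, s); it is valid if n >= t > s >= 1.\<close>
definition valid_band :: "nat \<Rightarrow> nat \<times> nat \<Rightarrow> bool" where
  "valid_band n g \<longleftrightarrow> fst g \<le> n \<and> snd g < fst g \<and> 1 \<le> snd g"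

definition band_word :: "nat \<times> nat \<Rightarrow> aletter list" where
  "band_word g = (let t = fst g; s = snd g in
     map sg (rev [s+1..<t]) @ [sg s] @ map sgi [s+1..<t])"

definition band_to_artin :: "(nat \<times> nat) list \<Rightarrow> aletter list" where
  "band_to_artin w = concat (map band_word w)"

definition positive_word :: "nat \<Rightarrow> (nat \<times> nat) list \<Rightarrow> bool" where
  "positive_word n w \<longleftrightarrow> (\<forall>g\<in>set w. valid_band n g)"

inductive band_rel :: "nat \<Rightarrow> (nat \<times> nat) list \<Rightarrow> (nat \<times> nat) list \<Rightarrow> bool" for n where
  R1: "valid_band n (t, s) \<Longrightarrow> valid_band n (r, q) \<Longrightarrow>
       (int t - int r) * (int t - int q) * (int s - int r) * (int s - int q) > 0 \<Longrightarrow>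
       band_rel n [(t, s), (r, q)] [(r, q), (t, s)]"
| R2a: "t \<le> n \<Longrightarrow> s < t \<Longrightarrow> r < s \<Longrightarrow> 1 \<le> r \<Longrightarrow>
       band_rel n [(t, s), (s, r)] [(t, r), (t, s)]"
| R2b: "t \<le> n \<Longrightarrow> s < t \<Longrightarrow> r < s \<Longrightarrow> 1 \<le> r \<Longrightarrow>
       band_rel n [(t, r), (t, s)] [(s, r), (t, r)]"
| R2c: "t \<le> n \<Longrightarrow> s < t \<Longrightarrow> r < s \<Longrightarrow> 1 \<le> r \<Longrightarrow>
       band_rel n [(t, s), (s, r)] [(s, r), (t, r)]"
| sym: "band_rel n u v \<Longrightarrow> band_rel n v u"

definition pos_step :: "nat \<Rightarrow> (nat \<times> nat) list \<Rightarrow> (nat \<times> nat) list \<Rightarrow> bool" where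
  "pos_step n x y \<longleftrightarrow> (\<exists>p q l r. x = p @ l @ q \<and> y = p @ r @ q \<and> band_rel n l r)"

definition pos_equiv :: "nat \<Rightarrow> (nat \<times> nat) list \<Rightarrow> (nat \<times> nat) list \<Rightarrow> bool" where
  "pos_equiv n = (pos_step n)\<^sup>*\<^sup>*"

end

theory Submission
  imports Defs
begin

(*
  Garside's argument, for the band generators of Birman, Ko and Lee.

  If a X and b Y are positively equivalent, then X and Y factor through the complements that
  complete a and b to their least common multiple; for a = b this is left cancellation. The proof
  is by induction on the length, following the chain of elementary steps from a X to b Y. A step
  rewriting the head a into another letter is handled by Dehornoy's cube condition for the
  complement, which is a finite check because three bands have at most six endpoints.

  The element delta = a_{n,n-1} ... a_{2,1} conjugates each band to a rotated band, so
  Delta^2 = delta^n is central and every sigma_i = a_{i+1,i} divides it. Hence every Artin word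
  acts on fractions Delta^(-2k) P with P positive, braid-equivalent words giving equivalent
  fractions and a band word acting as itself. Two positive words V, W that are equal in B_n
  therefore satisfy Delta^(2j) V = Delta^(2j) W positively for some j, and cancellation
  gives V = W.
*)

type_synonym band = "nat \<times> nat"

lemma pos_step_sym: "pos_step n x y \<Longrightarrow> pos_step n y x"
  unfolding pos_step_def by (blast intro: band_rel.sym)

lemma pos_equiv_refl [simp]: "pos_equiv n x x"
  by (simp add: pos_equiv_def)

lemma pos_equiv_trans [trans]: "pos_equiv n x y \<Longrightarrow> pos_equiv n y z \<Longrightarrow> pos_equiv n x z"
  unfolding pos_equiv_def by (rule rtranclp_trans)

lemma pos_equiv_sym: "pos_equiv n x y \<Longrightarrow> pos_equiv n y x"
  unfolding pos_equiv_def
  by (induction rule: rtranclp_induct) (auto intro: pos_step_sym converse_rtranclp_into_rtranclp)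

lemma pos_step_append_context: "pos_step n x y \<Longrightarrow> pos_step n (p @ x @ q) (p @ y @ q)"
  unfolding pos_step_def by (metis append.assoc)

lemma pos_equiv_append_context: "pos_equiv n x y \<Longrightarrow> pos_equiv n (p @ x @ q) (p @ y @ q)"
  unfolding pos_equiv_def
  by (induction rule: rtranclp_induct) (auto intro: pos_step_append_context rtranclp.rtrancl_into_rtrancl)

lemma pos_equiv_append_left: "pos_equiv n x y \<Longrightarrow> pos_equiv n (p @ x) (p @ y)"
  using pos_equiv_append_context[of n x y p "[]"] by simp

lemma pos_equiv_append_right: "pos_equiv n x y \<Longrightarrow> pos_equiv n (x @ q) (y @ q)"
  using pos_equiv_append_context[of n x y "[]" q] by simp

lemma pos_equiv_Cons: "pos_equiv n x y \<Longrightarrow> pos_equiv n (a # x) (a # y)"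
  using pos_equiv_append_left[of n x y "[a]"] by simp

lemma pos_equiv_Cons2: "pos_equiv n [a, b] [c, d] \<Longrightarrow> pos_equiv n (a # b # w) (c # d # w)"
  using pos_equiv_append_right[of n "[a, b]" "[c, d]" w] by simp

lemma pos_step_imp_pos_equiv: "pos_step n x y \<Longrightarrow> pos_equiv n x y"
  unfolding pos_equiv_def by auto

lemma band_rel_imp_pos_equiv: "band_rel n l r \<Longrightarrow> pos_equiv n l r"
  unfolding pos_equiv_def pos_step_def
  by (rule r_into_rtranclp) (metis append.left_neutral append_Nil2)

lemma band_rel_length: "band_rel n l r \<Longrightarrow> length l = 2 \<and> length r = 2"
  by (induction rule: band_rel.induct) auto

lemma band_rel_valid: "band_rel n l r \<Longrightarrow> positive_word n l \<and> positive_word n r"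
  by (induction rule: band_rel.induct) (auto simp: valid_band_def positive_word_def)

lemma pos_equiv_length: "pos_equiv n x y \<Longrightarrow> length x = length y"
  unfolding pos_equiv_def
proof (induction rule: rtranclp_induct)
  case (step y z)
  then show ?case unfolding pos_step_def using band_rel_length by fastforce
qed simp

lemma pos_step_invalid_hd:
  assumes "pos_step n (b # Y) u" and "\<not> valid_band n b"
  obtains Y' where "u = b # Y'"
proof -
  obtain p q l r where step: "b # Y = p @ l @ q" "u = p @ r @ q" "band_rel n l r"
    using assms(1) unfolding pos_step_def by blast
  have "p \<noteq> []"
  proof
    assume "p = []"
    with step(1) band_rel_length[OF step(3)] have "b \<in> set l" by (cases l) auto
    with band_rel_valid[OF step(3)] assms(2) show False by (auto simp: positive_word_def)
  qed
  with step that show ?thesis by (cases p) auto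
qed

lemma pos_equiv_invalid_hd:
  "pos_equiv n (b # Y) u \<Longrightarrow> \<not> valid_band n b \<Longrightarrow> \<exists>Y'. u = b # Y'"
  unfolding pos_equiv_def
proof (induction rule: rtranclp_induct)
  case (step y z)
  then show ?case by (metis pos_step_invalid_hd)
qed simp

lemma positive_word_append [simp]:
  "positive_word n (u @ v) \<longleftrightarrow> positive_word n u \<and> positive_word n v"
  by (auto simp: positive_word_def)

lemma positive_word_Cons [simp]:
  "positive_word n (g # v) \<longleftrightarrow> valid_band n g \<and> positive_word n v"
  by (auto simp: positive_word_def)

lemma positive_word_Nil [simp]: "positive_word n []"
  by (simp add: positive_word_def)

lemma R2a_equiv: "t \<le> n \<Longrightarrow> s < t \<Longrightarrow> r < s \<Longrightarrow> 1 \<le> r \<Longrightarrow>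
    pos_equiv n [(t, s), (s, r)] [(t, r), (t, s)]"
  by (intro band_rel_imp_pos_equiv band_rel.R2a)

lemma R2b_equiv: "t \<le> n \<Longrightarrow> s < t \<Longrightarrow> r < s \<Longrightarrow> 1 \<le> r \<Longrightarrow>
    pos_equiv n [(t, r), (t, s)] [(s, r), (t, r)]"
  by (intro band_rel_imp_pos_equiv band_rel.R2b)

lemma R2c_equiv: "t \<le> n \<Longrightarrow> s < t \<Longrightarrow> r < s \<Longrightarrow> 1 \<le> r \<Longrightarrow>
    pos_equiv n [(t, s), (s, r)] [(s, r), (t, r)]"
  by (intro band_rel_imp_pos_equiv band_rel.R2c)

text \<open>Bands are chords between the points 1, ..., n of a circle; relation (R1) applies
  exactly when the two chords are disjoint.\<close>

fun non_crossing :: "band \<Rightarrow> band \<Rightarrow> bool" where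
  "non_crossing (t, s) (r, q) \<longleftrightarrow> t \<noteq> r \<and> t \<noteq> q \<and> s \<noteq> r \<and> s \<noteq> q \<and>
     \<not> (s < r \<and> r < t \<and> q < s) \<and> \<not> (q < t \<and> t < r \<and> s < q)"

lemma R1_condition_iff_non_crossing:
  assumes "s < t" "q < r"
  shows "(int t - int r) * (int t - int q) * (int s - int r) * (int s - int q) > 0
    \<longleftrightarrow> non_crossing (t, s) (r, q)"
proof -
  have "(int t - int r) * (int t - int q) * (int s - int r) * (int s - int q)
      = ((int t - int r) * (int t - int q)) * ((int s - int r) * (int s - int q))"
    by (simp only: mult.assoc)
  then show ?thesis
    using assms unfolding non_crossing.simps
    by (simp only: zero_less_mult_iff mult_less_0_iff) linarith
qed

lemma R1_equiv: "valid_band n x \<Longrightarrow> valid_band n y \<Longrightarrow> non_crossing x y \<Longrightarrow>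
    pos_equiv n [x, y] [y, x]"
  by (cases x; cases y)
    (auto intro!: band_rel_imp_pos_equiv band_rel.R1
      simp: R1_condition_iff_non_crossing valid_band_def)

section \<open>Complements and subword reversing\<close>

text \<open>For distinct bands x and y, x \<cdot> complement x y = y \<cdot> complement y x is their least
  common right multiple in the monoid (Birman, Ko and Lee); it has length 3 if the chords of
  x and y cross, and length 2 otherwise.\<close>

fun complement :: "band \<Rightarrow> band \<Rightarrow> band list" where
  "complement (t, s) (r, q) =
    (if (t, s) = (r, q) then []
     else if t = r then (if q < s then [(s, q)] else [(t, q)])
     else if s = q then (if r < t then [(t, r)] else [(r, s)])
     else if s = r then [(r, q)]
     else if t = q then [(r, s)]
     else if s < r \<and> r < t \<and> q < s then [(t, r), (s, q)]
     else if q < t \<and> t < r \<and> s < q then [(r, s), (t, q)]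
     else [(r, q)])"

lemma complement_self [simp]: "complement x x = []"
  by (cases x) simp

lemma complement_non_crossing: "non_crossing x y \<Longrightarrow> complement x y = [y]"
  by (cases x; cases y) auto

lemma complement_positive:
  "valid_band n x \<Longrightarrow> valid_band n y \<Longrightarrow> positive_word n (complement x y)"
  by (cases x; cases y) (auto simp: valid_band_def positive_word_def)

lemma crossing_equiv: "q < s \<Longrightarrow> s < r \<Longrightarrow> r < t \<Longrightarrow> 1 \<le> q \<Longrightarrow> t \<le> n \<Longrightarrow>
    pos_equiv n [(t, s), (t, r), (s, q)] [(r, q), (t, q), (r, s)]"
proof -
  assume h: "q < s" "s < r" "r < t" "1 \<le> q" "t \<le> n"
  have "pos_equiv n [(t, s), (t, r), (s, q)] [(t, r), (r, s), (s, q)]"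
    using pos_equiv_append_right[OF pos_equiv_sym[OF R2a_equiv[of t n r s]], of "[(s, q)]"] h
    by simp
  also have "pos_equiv n \<dots> [(t, r), (r, q), (r, s)]"
    using pos_equiv_Cons[OF R2a_equiv[of r n s q], of "(t, r)"] h by simp
  also have "pos_equiv n \<dots> [(r, q), (t, q), (r, s)]"
    using pos_equiv_append_right[OF R2c_equiv[of t n r q], of "[(r, s)]"] h by simp
  finally show ?thesis .
qed

lemma complement_equiv:
  assumes "valid_band n x" "valid_band n y"
  shows "pos_equiv n (x # complement x y) (y # complement y x)"
proof (cases x; cases y)
  fix t s r q assume xy: "x = (t, s)" "y = (r, q)"
  have "s < t" "q < r" "1 \<le> s" "1 \<le> q" "t \<le> n" "r \<le> n"
    using assms xy by (auto simp: valid_band_def)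
  then show ?thesis unfolding xy
    by (auto intro: R2a_equiv R2b_equiv R2c_equiv crossing_equiv
        pos_equiv_sym[OF R2a_equiv] pos_equiv_sym[OF R2b_equiv] pos_equiv_sym[OF R2c_equiv]
        pos_equiv_sym[OF crossing_equiv] R1_equiv simp: valid_band_def)
qed

lemma band_rel_complement_form:
  "band_rel n l r \<Longrightarrow> \<exists>a c a' d. l = [a, c] \<and> r = [a', d] \<and>
     complement a a' = [c] \<and> complement a' a = [d] \<and> valid_band n a \<and> valid_band n a'"
proof (induction rule: band_rel.induct)
  case (R1 t s r q)
  then have "non_crossing (t, s) (r, q)" "non_crossing (r, q) (t, s)"
    by (auto simp: R1_condition_iff_non_crossing valid_band_def)
  with R1 show ?case by (auto simp: complement_non_crossing)
next
  case (sym u v)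
  then show ?case by blast
qed (auto simp: valid_band_def)

text \<open>Dehornoy's subword reversing: it computes u', v' with u v' \<equiv> v u' by repeatedly
  replacing the first letters x, y of the two words with their complements. The first
  argument is fuel; None means that the fuel ran out.\<close>

function (sequential) reversing ::
  "nat \<Rightarrow> band list \<Rightarrow> band list \<Rightarrow> (band list \<times> band list) option" where
  "reversing k [] v = Some ([], v)"
| "reversing k (x # u) [] = Some (x # u, [])"
| "reversing 0 (x # u) (y # v) = None"
| "reversing (Suc k) (x # u) (y # v) =
    (case reversing k u (complement x y) of
      None \<Rightarrow> None
    | Some (u1, v1) \<Rightarrow>
        (case reversing k (complement y x @ u1) v of
          None \<Rightarrow> None
        | Some (u2, v2) \<Rightarrow> Some (u2, v1 @ v2)))"
  by pat_completeness auto
termination by (relation "measure fst") auto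

lemma reversing_Suc: "reversing k u v = Some r \<Longrightarrow> reversing (Suc k) u v = Some r"
  by (induction k u v arbitrary: r rule: reversing.induct) (auto split: option.splits)

lemma reversing_mono:
  assumes "reversing k u v = Some r" "k \<le> k'"
  shows "reversing k' u v = Some r"
  using assms(2) by (induction rule: dec_induct) (auto intro: reversing_Suc assms(1))

lemma reversing_deterministic:
  "reversing k u v = Some r \<Longrightarrow> reversing k' u v = Some r' \<Longrightarrow> r = r'"
  using reversing_mono[of k u v r "max k k'"] reversing_mono[of k' u v r' "max k k'"] by auto

lemma reversing_sound:
  "reversing k u v = Some (u', v') \<Longrightarrow> positive_word n u \<Longrightarrow> positive_word n v \<Longrightarrow>
    positive_word n u' \<and> positive_word n v' \<and> pos_equiv n (u @ v') (v @ u')"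
proof (induction k u v arbitrary: u' v' rule: reversing.induct)
  case (4 k x u y v)
  obtain u1 v1 where rev1: "reversing k u (complement x y) = Some (u1, v1)"
    using "4.prems"(1) by (auto split: option.splits)
  obtain u2 v2 where rev2: "reversing k (complement y x @ u1) v = Some (u2, v2)"
    using "4.prems"(1) rev1 by (auto split: option.splits)
  have result: "u' = u2" "v' = v1 @ v2"
    using "4.prems"(1) rev1 rev2 by auto
  have valid: "valid_band n x" "valid_band n y" "positive_word n u" "positive_word n v"
    using "4.prems"(2,3) by auto
  have IH1: "positive_word n u1 \<and> positive_word n v1 \<and> pos_equiv n (u @ v1) (complement x y @ u1)"
    using "4.IH"(1)[OF rev1 valid(3) complement_positive[OF valid(1,2)]] .
  have IH2: "positive_word n u2 \<and> positive_word n v2 \<and>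
      pos_equiv n (complement y x @ u1 @ v2) (v @ u2)"
    using "4.IH"(2)[OF rev1 HOL.refl rev2] IH1 valid complement_positive by simp
  have "pos_equiv n (x # u @ v1 @ v2) (x # complement x y @ u1 @ v2)"
    using pos_equiv_Cons[OF pos_equiv_append_right[OF conjunct2[OF conjunct2[OF IH1]]]] by simp
  also have "pos_equiv n \<dots> (y # complement y x @ u1 @ v2)"
    using pos_equiv_append_right[OF complement_equiv[OF valid(1,2)], of "u1 @ v2"] by simp
  also have "pos_equiv n \<dots> (y # v @ u2)"
    using pos_equiv_Cons IH2 by blast
  finally show ?case using result IH1 IH2 by simp
qed auto

section \<open>The cube condition\<close>

definition bands_over :: "nat set \<Rightarrow> band list \<Rightarrow> bool" where
  "bands_over S w \<longleftrightarrow> (\<forall>x\<in>set w. fst x \<in> S \<and> snd x \<in> S \<and> snd x < fst x)"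

lemma bands_over_append [simp]: "bands_over S (u @ v) \<longleftrightarrow> bands_over S u \<and> bands_over S v"
  by (auto simp: bands_over_def)

lemma bands_over_Cons: "bands_over S (x # v) \<longleftrightarrow> bands_over S [x] \<and> bands_over S v"
  by (auto simp: bands_over_def)

lemma complement_bands_over: "bands_over S [x, y] \<Longrightarrow> bands_over S (complement x y)"
  by (cases x; cases y) (auto simp: bands_over_def)

lemma complement_relabel:
  assumes "strict_mono_on S g" "bands_over S [x, y]"
  shows "complement (map_prod g g x) (map_prod g g y) = map (map_prod g g) (complement x y)"
proof (cases x; cases y)
  fix t s r q assume xy: "x = (t, s)" "y = (r, q)"
  have in_S: "t \<in> S" "s \<in> S" "r \<in> S" "q \<in> S" "s < t" "q < r"
    using assms(2) xy by (auto simp: bands_over_def)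
  have less: "g a < g b \<longleftrightarrow> a < b" if "a \<in> S" "b \<in> S" for a b
    using strict_mono_on_less[OF assms(1) that] .
  have eq: "g a = g b \<longleftrightarrow> a = b" if "a \<in> S" "b \<in> S" for a b
    using inj_on_eq_iff[OF strict_mono_on_imp_inj_on[OF assms(1)] that] .
  show ?thesis unfolding xy using in_S by (simp add: less eq)
qed

lemma reversing_bands_over:
  "reversing k u v = Some (u', v') \<Longrightarrow> bands_over S u \<Longrightarrow> bands_over S v \<Longrightarrow>
    bands_over S u' \<and> bands_over S v'"
proof (induction k u v arbitrary: u' v' rule: reversing.induct)
  case (4 k x u y v)
  have over: "bands_over S [x, y]" "bands_over S [y, x]" "bands_over S u" "bands_over S v"
    using "4.prems"(2,3) bands_over_Cons by (auto simp: bands_over_def)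
  show ?case
    using "4.prems"(1) "4.IH" complement_bands_over[OF over(1)] complement_bands_over[OF over(2)]
      over(3,4)
    by (fastforce split: option.splits)
qed (auto simp: bands_over_def)

lemma reversing_relabel:
  assumes "strict_mono_on S g"
  shows "bands_over S u \<Longrightarrow> bands_over S v \<Longrightarrow>
    reversing k (map (map_prod g g) u) (map (map_prod g g) v)
    = map_option (map_prod (map (map_prod g g)) (map (map_prod g g))) (reversing k u v)"
proof (induction k u v rule: reversing.induct)
  case (4 k x u y v)
  have over: "bands_over S [x, y]" "bands_over S [y, x]" "bands_over S u" "bands_over S v"
    using "4.prems" bands_over_Cons by (auto simp: bands_over_def)
  note compl = complement_relabel[OF assms over(1)] complement_relabel[OF assms over(2)]
    complement_bands_over[OF over(1)] complement_bands_over[OF over(2)]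
  show ?case
  proof (cases "reversing k u (complement x y)")
    case None
    then show ?thesis using "4.IH"(1) over compl by simp
  next
    case (Some r1)
    obtain u1 v1 where r1: "r1 = (u1, v1)" by (cases r1)
    have over1: "bands_over S u1"
      using reversing_bands_over Some r1 over(3) compl(3) by blast
    show ?thesis
      using Some r1 "4.IH"(1) "4.IH"(2)[OF Some[unfolded r1] HOL.refl] over over1 compl
      by (simp split: option.splits)
  qed
qed auto

lemma reversing_relabel_Some:
  assumes "strict_mono_on S g" "bands_over S u" "bands_over S v"
    and "reversing k (map (map_prod g g) u) (map (map_prod g g) v) = Some (u', v')"
  obtains u0 v0 where "reversing k u v = Some (u0, v0)"
    "u' = map (map_prod g g) u0" "v' = map (map_prod g g) v0"
    "bands_over S u0" "bands_over S v0"
  using assms reversing_relabel[OF assms(1-3), of k] reversing_bands_over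
  by (cases "reversing k u v") fastforce+

text \<open>Dehornoy's cube condition for the triple a, a', b, with fuel 5 for reversing; it is
  what makes reversing complete.\<close>

definition cube_condition :: "band \<Rightarrow> band \<Rightarrow> band \<Rightarrow> bool" where
  "cube_condition a a' b \<longleftrightarrow>
    (case reversing 5 (complement a' a) (complement a' b) of
      None \<Rightarrow> False
    | Some (U, V) \<Rightarrow>
        (case reversing 5 (complement a a' @ V) (complement a b) of
          None \<Rightarrow> False
        | Some (Q, R) \<Rightarrow> R = [] \<and> reversing 5 (complement b a' @ U) (complement b a @ Q) = Some ([], [])))"

lemma cube_condition_iff:
  "cube_condition a a' b \<longleftrightarrow> (\<exists>U V Q.
     reversing 5 (complement a' a) (complement a' b) = Some (U, V) \<and>
     reversing 5 (complement a a' @ V) (complement a b) = Some (Q, []) \<and>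
     reversing 5 (complement b a' @ U) (complement b a @ Q) = Some ([], []))"
  unfolding cube_condition_def by (auto split: option.splits)

text \<open>Three bands have at most six endpoints, and relabelling these monotonically into
  1, ..., 6 preserves the cube condition; so it suffices to check bands on six points.\<close>

definition small_bands :: "band list" where
  "small_bands = [(t, s). t \<leftarrow> [2..<7], s \<leftarrow> [1..<t]]"

lemma cube_condition_small_bands:
  "list_all (\<lambda>a. list_all (\<lambda>a'. list_all (cube_condition a a') small_bands) small_bands) small_bands"
  by code_simp

lemma rank_strict_mono:
  fixes S :: "'a::linorder set"
  shows "finite S \<Longrightarrow> strict_mono_on S (\<lambda>x. card {y \<in> S. y \<le> x})"
proof (rule strict_mono_onI)
  fix x y assume "finite S" "x \<in> S" "y \<in> S" "x < y"
  then have "{z \<in> S. z \<le> x} \<subseteq> {z \<in> S. z \<le> y}" "y \<notin> {z \<in> S. z \<le> x}"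
    by auto
  then have "{z \<in> S. z \<le> x} \<subset> {z \<in> S. z \<le> y}"
    using \<open>y \<in> S\<close> by blast
  with \<open>finite S\<close> show "card {z \<in> S. z \<le> x} < card {z \<in> S. z \<le> y}"
    by (intro psubset_card_mono) auto
qed

lemma rank_bounds:
  fixes S :: "'a::linorder set"
  assumes "finite S" "x \<in> S"
  shows "1 \<le> card {y \<in> S. y \<le> x}" "card {y \<in> S. y \<le> x} \<le> card S"
proof -
  have "{y \<in> S. y \<le> x} \<noteq> {}" using assms(2) by auto
  then show "1 \<le> card {y \<in> S. y \<le> x}"
    using assms(1) by (simp add: Suc_le_eq card_gt_0_iff)
  show "card {y \<in> S. y \<le> x} \<le> card S"
    using assms(1) by (intro card_mono) auto
qed

lemma mem_small_bands: "(t, s) \<in> set small_bands \<longleftrightarrow> 1 \<le> s \<and> s < t \<and> t \<le> 6"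
  by (auto simp: small_bands_def image_iff)

lemma cube_condition_relabel:
  assumes g: "strict_mono_on S g" and over: "bands_over S [a, a', b]"
    and cube: "cube_condition (map_prod g g a) (map_prod g g a') (map_prod g g b)"
  shows "cube_condition a a' b"
proof -
  let ?G = "map (map_prod g g)"
  have over_compl: "bands_over S (complement x y)"
    and compl: "complement (map_prod g g x) (map_prod g g y) = ?G (complement x y)"
    if "x \<in> {a, a', b}" "y \<in> {a, a', b}" for x y
  proof -
    have "bands_over S [x, y]" using over that by (auto simp: bands_over_def)
    then show "bands_over S (complement x y)"
      and "complement (map_prod g g x) (map_prod g g y) = ?G (complement x y)"
      by (simp_all add: complement_bands_over complement_relabel[OF g])
  qed
  obtain U V Q where rev:
    "reversing 5 (?G (complement a' a)) (?G (complement a' b)) = Some (U, V)"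
    "reversing 5 (?G (complement a a') @ V) (?G (complement a b)) = Some (Q, [])"
    "reversing 5 (?G (complement b a') @ U) (?G (complement b a) @ Q) = Some ([], [])"
    using cube by (auto simp: cube_condition_iff compl)
  obtain U0 V0 where rev1: "reversing 5 (complement a' a) (complement a' b) = Some (U0, V0)"
    and UV: "U = ?G U0" "V = ?G V0" and over1: "bands_over S U0" "bands_over S V0"
    by (rule reversing_relabel_Some[OF g _ _ rev(1)]) (auto intro: over_compl)
  obtain Q0 R0 where rev2: "reversing 5 (complement a a' @ V0) (complement a b) = Some (Q0, R0)"
    and Q: "Q = ?G Q0" "[] = ?G R0" and over2: "bands_over S Q0"
    by (rule reversing_relabel_Some[OF g _ _ rev(2)[unfolded UV, folded map_append]])
      (auto intro: over_compl over1)
  have rev3: "reversing 5 (complement b a' @ U0) (complement b a @ Q0) = Some ([], [])"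
    by (rule reversing_relabel_Some[OF g _ _ rev(3)[unfolded UV Q(1), folded map_append]])
      (auto intro: over_compl over1 over2)
  show ?thesis
    using rev1 rev2 rev3 Q unfolding cube_condition_iff by auto
qed

lemma cube_condition_holds:
  assumes "valid_band n a" "valid_band n a'" "valid_band n b"
  shows "cube_condition a a' b"
proof -
  define S where "S = set [fst a, snd a, fst a', snd a', fst b, snd b]"
  define g where "g x = card {y \<in> S. y \<le> x}" for x
  have S: "finite S" "card S \<le> 6"
    unfolding S_def using card_length[of "[fst a, snd a, fst a', snd a', fst b, snd b]"] by auto
  have g: "strict_mono_on S g"
    unfolding g_def using rank_strict_mono[OF S(1)] .
  have over: "bands_over S [a, a', b]"
    using assms by (auto simp: bands_over_def S_def valid_band_def)
  have "map_prod g g x \<in> set small_bands" if "x \<in> {a, a', b}" for x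
  proof -
    have x: "fst x \<in> S" "snd x \<in> S" "snd x < fst x"
      using over that by (auto simp: bands_over_def)
    then have "g (snd x) < g (fst x)"
      using strict_mono_on_less[OF g] by blast
    moreover have "1 \<le> g (snd x)" "g (fst x) \<le> 6"
      unfolding g_def using rank_bounds[OF S(1)] x S(2) by (blast, fastforce)
    ultimately show ?thesis
      by (cases x) (simp add: mem_small_bands)
  qed
  then have "cube_condition (map_prod g g a) (map_prod g g a') (map_prod g g b)"
    using cube_condition_small_bands by (simp add: list_all_iff)
  then show ?thesis
    by (rule cube_condition_relabel[OF g over])
qed

section \<open>Left cancellation and common multiples\<close>

text \<open>For a = b this says X \<equiv> Y, since the complement of a with itself is empty.\<close>

definition factors_through_lcm :: "nat \<Rightarrow> band \<Rightarrow> band list \<Rightarrow> band \<Rightarrow> band list \<Rightarrow> bool" where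
  "factors_through_lcm n a X b Y \<longleftrightarrow>
    (\<exists>W. pos_equiv n X (complement a b @ W) \<and> pos_equiv n Y (complement b a @ W))"

definition lcm_property_below :: "nat \<Rightarrow> nat \<Rightarrow> bool" where
  "lcm_property_below n m \<longleftrightarrow> (\<forall>a b X Y. length X < m \<longrightarrow>
     pos_equiv n (a # X) (b # Y) \<longrightarrow> factors_through_lcm n a X b Y)"

lemma factors_through_lcm_refl: "factors_through_lcm n a X a X"
  unfolding factors_through_lcm_def by (auto intro!: exI[of _ X])

lemma factors_through_lcm_cong:
  "pos_equiv n X X' \<Longrightarrow> factors_through_lcm n a X' b Y \<Longrightarrow> factors_through_lcm n a X b Y"
  unfolding factors_through_lcm_def by (blast intro: pos_equiv_trans)

lemma reversing_complete:
  assumes lcm: "lcm_property_below n m"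
  shows "length (U @ X) \<le> m \<Longrightarrow> length (U @ X) \<le> k \<Longrightarrow> pos_equiv n (U @ X) (V @ Y) \<Longrightarrow>
    \<exists>U' V' W. reversing k U V = Some (U', V') \<and>
      pos_equiv n X (V' @ W) \<and> pos_equiv n Y (U' @ W)"
proof (induction k U V arbitrary: X Y rule: reversing.induct)
  case (1 k v)
  then show ?case by (auto intro!: exI[of _ Y])
next
  case (2 k x u)
  then have "pos_equiv n Y ((x # u) @ X)"
    using pos_equiv_sym by simp
  then show ?case by (auto intro!: exI[of _ X])
next
  case (4 k x u y v X Y)
  have len: "length (u @ X) < m" "length (u @ X) \<le> k"
    using "4.prems"(1,2) by auto
  have eq: "pos_equiv n (x # u @ X) (y # v @ Y)"
    using "4.prems"(3) by simp
  then obtain W0 where W0: "pos_equiv n (u @ X) (complement x y @ W0)"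
      "pos_equiv n (v @ Y) (complement y x @ W0)"
    using lcm len(1) unfolding lcm_property_below_def factors_through_lcm_def by blast
  obtain u1 v1 W1 where rev1: "reversing k u (complement x y) = Some (u1, v1)"
      and W1: "pos_equiv n X (v1 @ W1)" "pos_equiv n W0 (u1 @ W1)"
    using "4.IH"(1)[OF less_imp_le[OF len(1)] len(2) W0(1)] by blast
  have eq2: "pos_equiv n ((complement y x @ u1) @ W1) (v @ Y)"
    using pos_equiv_sym[OF pos_equiv_trans[OF W0(2) pos_equiv_append_left[OF W1(2)]]] by simp
  have len2: "length ((complement y x @ u1) @ W1) = length (u @ X)"
    using pos_equiv_length[OF eq] pos_equiv_length[OF eq2] by simp
  obtain u2 v2 W2 where rev2: "reversing k (complement y x @ u1) v = Some (u2, v2)"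
      and W2: "pos_equiv n W1 (v2 @ W2)" "pos_equiv n Y (u2 @ W2)"
    using "4.IH"(2)[OF rev1 HOL.refl, of W1 Y] len len2 eq2 by auto
  have "pos_equiv n X ((v1 @ v2) @ W2)"
    using pos_equiv_trans[OF W1(1) pos_equiv_append_left[OF W2(1)]] by simp
  then show ?case
    using rev1 rev2 W2(2) by auto
qed simp

text \<open>The cube condition turns a factorisation through the lcm of a' and b into one through
  the lcm of a and b.\<close>

lemma factors_through_lcm_head_step:
  assumes lcm: "lcm_property_below n (Suc (length q))"
    and compl: "complement a a' = [c]" "complement a' a = [d]"
    and valid: "valid_band n a" "valid_band n a'" "valid_band n b"
    and "factors_through_lcm n a' (d # q) b Y"
  shows "factors_through_lcm n a (c # q) b Y"
proof -
  obtain W where W: "pos_equiv n ([d] @ q) (complement a' b @ W)"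
      "pos_equiv n Y (complement b a' @ W)"
    using assms(7) unfolding factors_through_lcm_def by auto
  obtain U' V' W1 where rev: "reversing (Suc (length q)) [d] (complement a' b) = Some (U', V')"
      and W1: "pos_equiv n q (V' @ W1)" "pos_equiv n W (U' @ W1)"
    using reversing_complete[OF lcm _ _ W(1), where k = "Suc (length q)"] by auto
  obtain U V Q where cube:
    "reversing 5 (complement a' a) (complement a' b) = Some (U, V)"
    "reversing 5 (complement a a' @ V) (complement a b) = Some (Q, [])"
    "reversing 5 (complement b a' @ U) (complement b a @ Q) = Some ([], [])"
    using cube_condition_holds[OF valid] unfolding cube_condition_iff by blast
  have UV: "U' = U" "V' = V"
    using reversing_deterministic[OF rev cube(1)[unfolded compl(2)]] by auto
  note positive = complement_positive[OF valid(1,2)] complement_positive[OF valid(2,1)]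
    complement_positive[OF valid(1,3)] complement_positive[OF valid(3,1)]
    complement_positive[OF valid(2,3)] complement_positive[OF valid(3,2)]
  have UV_positive: "positive_word n U" "positive_word n V"
    using reversing_sound[OF cube(1)] positive by auto
  have Q: "positive_word n Q" "pos_equiv n (complement a a' @ V) (complement a b @ Q)"
    using reversing_sound[OF cube(2)] positive UV_positive by auto
  have lcm_eq: "pos_equiv n (complement b a' @ U) (complement b a @ Q)"
    using reversing_sound[OF cube(3)] positive UV_positive Q(1) by auto
  have "pos_equiv n (c # q) (complement a a' @ V @ W1)"
    using pos_equiv_Cons[OF W1(1)] compl(1) UV by simp
  also have "pos_equiv n \<dots> (complement a b @ Q @ W1)"
    using pos_equiv_append_right[OF Q(2)] by simp
  finally have X: "pos_equiv n (c # q) (complement a b @ Q @ W1)" .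
  have "pos_equiv n Y (complement b a' @ U @ W1)"
    using pos_equiv_trans[OF W(2) pos_equiv_append_left[OF W1(2)]] UV by simp
  also have "pos_equiv n \<dots> (complement b a @ Q @ W1)"
    using pos_equiv_append_right[OF lcm_eq] by simp
  finally show ?thesis
    using X unfolding factors_through_lcm_def by blast
qed

lemma factors_through_lcm_step:
  assumes lcm: "lcm_property_below n (length X)"
    and step: "pos_step n (a # X) (a' # X')"
    and rest: "pos_equiv n (a' # X') (b # Y)"
    and IH: "factors_through_lcm n a' X' b Y"
  shows "factors_through_lcm n a X b Y"
proof -
  obtain p q l r where decomp: "a # X = p @ l @ q" "a' # X' = p @ r @ q" "band_rel n l r"
    using step unfolding pos_step_def by blast
  show ?thesis
  proof (cases p)
    case (Cons c p')
    then have "pos_equiv n X X'" "a' = a"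
      using decomp pos_equiv_append_context[OF band_rel_imp_pos_equiv[OF decomp(3)]] by auto
    then show ?thesis
      using IH factors_through_lcm_cong by blast
  next
    case Nil
    obtain a0 c a1 d where rel: "l = [a0, c]" "r = [a1, d]"
        "complement a0 a1 = [c]" "complement a1 a0 = [d]" "valid_band n a0" "valid_band n a1"
      using band_rel_complement_form[OF decomp(3)] by blast
    have heads: "a0 = a" "X = c # q" "a1 = a'" "X' = d # q"
      using decomp(1,2) Nil rel(1,2) by auto
    have "valid_band n b"
      using pos_equiv_invalid_hd[OF pos_equiv_sym[OF rest]] rel(6) heads(3) by blast
    then show ?thesis
      using factors_through_lcm_head_step[of n q a a' c d b Y] lcm rel IH heads by simp
  qed
qed

lemma pos_equiv_Cons_factors_through_lcm:
  "pos_equiv n (a # X) (b # Y) \<Longrightarrow> factors_through_lcm n a X b Y"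
proof (induction "length X" arbitrary: a b X Y rule: less_induct)
  case less
  have lcm: "lcm_property_below n (length X)"
    unfolding lcm_property_below_def using less.hyps by blast
  have "factors_through_lcm n a' X' b Y"
    if "(pos_step n)\<^sup>*\<^sup>* u (b # Y)" "u = a' # X'" "length X' = length X" for u a' X'
    using that
  proof (induction arbitrary: a' X' rule: converse_rtranclp_induct)
    case base
    then show ?case by (simp add: factors_through_lcm_refl)
  next
    case (step u u')
    obtain a'' X'' where u': "u' = a'' # X''" "length X'' = length X"
      using pos_equiv_length[OF pos_step_imp_pos_equiv[OF step(1)]] step.prems
      by (cases u') auto
    have "pos_equiv n u' (b # Y)"
      using step(2) unfolding pos_equiv_def .
    then show ?case
      using factors_through_lcm_step[OF _ _ _ step.IH[OF u']] lcm step(1) step.prems u' by simp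
  qed
  then show ?case
    using less.prems unfolding pos_equiv_def by blast
qed

lemma pos_equiv_Cons_cancel: "pos_equiv n (a # X) (a # Y) \<Longrightarrow> pos_equiv n X Y"
  using pos_equiv_Cons_factors_through_lcm[of n a X a Y]
  unfolding factors_through_lcm_def by (metis append_Nil complement_self pos_equiv_sym pos_equiv_trans)

lemma pos_equiv_append_cancel_left: "pos_equiv n (p @ X) (p @ Y) \<Longrightarrow> pos_equiv n X Y"
  by (induction p) (auto dest: pos_equiv_Cons_cancel)

section \<open>The fundamental element and the full twist\<close>

text \<open>delta h l = a_{h,h-1} \<cdot>\<cdot>\<cdot> a_{l+1,l}, the fundamental element of the bands on the strands
  l, ..., h; delta n 1 is the element \<delta> of Birman, Ko and Lee, and \<delta>^n = \<Delta>^2 is central.\<close>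

definition delta :: "nat \<Rightarrow> nat \<Rightarrow> band list" where
  "delta h l = map (\<lambda>i. (Suc i, i)) (rev [l..<h])"

lemma delta_empty: "h \<le> l \<Longrightarrow> delta h l = []"
  by (simp add: delta_def)

lemma delta_snoc: "l < h \<Longrightarrow> delta h l = delta h (Suc l) @ [(Suc l, l)]"
  unfolding delta_def by (simp add: upt_rec)

lemma delta_Cons: "l < h \<Longrightarrow> delta h l = (h, h - 1) # delta (h - 1) l"
  unfolding delta_def by (cases h) auto

lemma mem_delta: "x \<in> set (delta h l) \<longleftrightarrow> (\<exists>i. l \<le> i \<and> i < h \<and> x = (Suc i, i))"
  unfolding delta_def by auto

lemma delta_positive: "1 \<le> l \<Longrightarrow> h \<le> n \<Longrightarrow> positive_word n (delta h l)"
  unfolding positive_word_def valid_band_def by (auto simp: mem_delta)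

lemma non_crossing_commute_word:
  "valid_band n g \<Longrightarrow> positive_word n w \<Longrightarrow> \<forall>x\<in>set w. non_crossing g x \<Longrightarrow>
    pos_equiv n (g # w) (w @ [g])"
proof (induction w)
  case (Cons x w)
  then have "pos_equiv n (g # x # w) (x # g # w)"
    using pos_equiv_Cons2[OF R1_equiv] by simp
  also have "pos_equiv n \<dots> (x # w @ [g])"
    using pos_equiv_Cons Cons by simp
  finally show ?case by simp
qed simp

lemma delta_left_factor:
  "1 \<le> l \<Longrightarrow> l < h \<Longrightarrow> h \<le> n \<Longrightarrow> pos_equiv n (delta h l) ((h, l) # delta h (Suc l))"
proof (induction "h - l" arbitrary: l rule: less_induct)
  case less
  show ?case
  proof (cases "Suc l = h")
    case True
    then show ?thesis by (simp add: delta_snoc delta_empty)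
  next
    case False
    then have lt: "Suc l < h" using less.prems by simp
    have IH: "pos_equiv n (delta h (Suc l)) ((h, Suc l) # delta h (Suc (Suc l)))"
      using less.hyps[of "Suc l"] less.prems lt by simp
    have "pos_equiv n (delta h l) ((h, Suc l) # delta h (Suc (Suc l)) @ [(Suc l, l)])"
      using delta_snoc[OF less.prems(2)] pos_equiv_append_right[OF IH] by simp
    also have "pos_equiv n \<dots> ((h, Suc l) # (Suc l, l) # delta h (Suc (Suc l)))"
    proof -
      have "pos_equiv n ((Suc l, l) # delta h (Suc (Suc l))) (delta h (Suc (Suc l)) @ [(Suc l, l)])"
        using less.prems
        by (intro non_crossing_commute_word delta_positive) (auto simp: valid_band_def mem_delta)
      then show ?thesis
        using pos_equiv_Cons[OF pos_equiv_sym] by simp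
    qed
    also have "pos_equiv n \<dots> ((h, l) # (h, Suc l) # delta h (Suc (Suc l)))"
      using less.prems lt by (intro pos_equiv_Cons2[OF R2a_equiv]) auto
    also have "pos_equiv n \<dots> ((h, l) # delta h (Suc l))"
      using pos_equiv_Cons[OF pos_equiv_sym[OF IH]] by simp
    finally show ?thesis .
  qed
qed

lemma delta_right_factor:
  assumes "1 \<le> l" "l < h" "h \<le> n"
  shows "pos_equiv n (delta h l) (delta (h - 1) l @ [(h, l)])"
proof (cases "h - 1 = l")
  case True
  then show ?thesis using assms by (simp add: delta_Cons delta_empty)
next
  case False
  then have lt: "l < h - 1" using assms by simp
  have "delta h l = (h, h - 1) # delta (h - 1) l"
    using delta_Cons assms by simp
  also have "pos_equiv n \<dots> ((h, h - 1) # (h - 1, l) # delta (h - 1) (Suc l))"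
    using pos_equiv_Cons[OF delta_left_factor[OF assms(1) lt]] assms by simp
  also have "pos_equiv n \<dots> ((h - 1, l) # (h, l) # delta (h - 1) (Suc l))"
    using assms lt by (intro pos_equiv_Cons2[OF R2c_equiv]) auto
  also have "pos_equiv n \<dots> ((h - 1, l) # delta (h - 1) (Suc l) @ [(h, l)])"
    using assms
    by (intro pos_equiv_Cons[OF non_crossing_commute_word] delta_positive)
      (auto simp: valid_band_def mem_delta)
  also have "pos_equiv n \<dots> (delta (h - 1) l @ [(h, l)])"
    using pos_equiv_append_right[OF pos_equiv_sym[OF delta_left_factor[OF assms(1) lt]]] assms
    by simp
  finally show ?thesis .
qed

text \<open>Conjugation by delta h l lowers both endpoints of a band by one, cyclically in [l, h].\<close>

definition rotate_band :: "nat \<Rightarrow> nat \<Rightarrow> band \<Rightarrow> band" where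
  "rotate_band h l g = (if l < snd g then (fst g - 1, snd g - 1) else (h, fst g - 1))"

lemma rotate_band_valid: "valid_band n g \<Longrightarrow> valid_band n (rotate_band n 1 g)"
  by (cases g) (auto simp: rotate_band_def valid_band_def)

lemma delta_conjugation_below_top:
  assumes IH: "pos_equiv n (delta (h - 1) l @ [(t, s)]) (rotate_band (h - 1) l (t, s) # delta (h - 1) l)"
    and "1 \<le> l" "l \<le> s" "s < t" "t < h" "h \<le> n"
  shows "pos_equiv n (delta h l @ [(t, s)]) (rotate_band h l (t, s) # delta h l)"
proof -
  have "delta h l @ [(t, s)] = (h, h - 1) # delta (h - 1) l @ [(t, s)]"
    using delta_Cons assms by simp
  also have "pos_equiv n \<dots> ((h, h - 1) # rotate_band (h - 1) l (t, s) # delta (h - 1) l)"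
    using pos_equiv_Cons[OF IH] by simp
  also have "pos_equiv n \<dots> (rotate_band h l (t, s) # (h, h - 1) # delta (h - 1) l)"
  proof (cases "l < s")
    case True
    then show ?thesis
      using assms by (simp add: rotate_band_def) (rule pos_equiv_Cons2[OF R1_equiv]; auto simp: valid_band_def)
  next
    case False
    then show ?thesis
      using assms by (simp add: rotate_band_def) (rule pos_equiv_Cons2[OF R2a_equiv]; auto)
  qed
  also have "\<dots> = rotate_band h l (t, s) # delta h l"
    using delta_Cons assms by simp
  finally show ?thesis .
qed

lemma delta_conjugation_top:
  assumes IH: "pos_equiv n (delta h (Suc l) @ [(h, s)]) (rotate_band h (Suc l) (h, s) # delta h (Suc l))"
    and "1 \<le> l" "l < s" "s < h" "h \<le> n"
  shows "pos_equiv n (delta h l @ [(h, s)]) (rotate_band h l (h, s) # delta h l)"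
proof -
  have "pos_equiv n (delta h l @ [(h, s)]) ((h, l) # delta h (Suc l) @ [(h, s)])"
    using pos_equiv_append_right[OF delta_left_factor] assms by simp
  also have "pos_equiv n \<dots> ((h, l) # rotate_band h (Suc l) (h, s) # delta h (Suc l))"
    using pos_equiv_Cons[OF IH] by simp
  also have "pos_equiv n \<dots> (rotate_band h l (h, s) # (h, l) # delta h (Suc l))"
  proof (cases "Suc l < s")
    case True
    then show ?thesis
      using assms by (simp add: rotate_band_def) (rule pos_equiv_Cons2[OF R1_equiv]; auto simp: valid_band_def)
  next
    case False
    then have "s = Suc l" using assms by simp
    then show ?thesis
      using assms by (simp add: rotate_band_def) (rule pos_equiv_Cons2[OF R2b_equiv]; auto)
  qed
  also have "pos_equiv n \<dots> (rotate_band h l (h, s) # delta h l)"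
    using pos_equiv_Cons[OF pos_equiv_sym[OF delta_left_factor]] assms by simp
  finally show ?thesis .
qed

lemma delta_conjugation:
  "1 \<le> l \<Longrightarrow> l \<le> s \<Longrightarrow> s < t \<Longrightarrow> t \<le> h \<Longrightarrow> h \<le> n \<Longrightarrow>
    pos_equiv n (delta h l @ [(t, s)]) (rotate_band h l (t, s) # delta h l)"
proof (induction "h - l" arbitrary: h l s t rule: less_induct)
  case less
  consider "t < h" | "t = h" "s = l" | "t = h" "l < s"
    using less.prems by linarith
  then show ?case
  proof cases
    case 1
    have "pos_equiv n (delta (h - 1) l @ [(t, s)]) (rotate_band (h - 1) l (t, s) # delta (h - 1) l)"
      using less.prems 1 by (intro less.hyps) auto
    then show ?thesis
      by (rule delta_conjugation_below_top) (use less.prems 1 in auto)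
  next
    case 2
    have "delta h l @ [(t, s)] = (h, h - 1) # delta (h - 1) l @ [(h, l)]"
      using delta_Cons less.prems 2 by simp
    also have "pos_equiv n \<dots> ((h, h - 1) # delta h l)"
      using pos_equiv_Cons[OF pos_equiv_sym[OF delta_right_factor]] less.prems 2 by simp
    finally show ?thesis
      using less.prems 2 by (simp add: rotate_band_def)
  next
    case 3
    have "pos_equiv n (delta h (Suc l) @ [(h, s)]) (rotate_band h (Suc l) (h, s) # delta h (Suc l))"
      using less.prems 3 by (intro less.hyps) auto
    then have "pos_equiv n (delta h l @ [(h, s)]) (rotate_band h l (h, s) # delta h l)"
      by (rule delta_conjugation_top) (use less.prems 3 in auto)
    with 3 show ?thesis by simp
  qed
qed

definition delta_pow :: "nat \<Rightarrow> nat \<Rightarrow> band list" where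
  "delta_pow n k = concat (replicate k (delta n 1))"

lemma delta_pow_add: "delta_pow n (a + b) = delta_pow n a @ delta_pow n b"
  by (simp add: delta_pow_def replicate_add)

lemma delta_pow_one: "delta_pow n 1 = delta n 1"
  by (simp add: delta_pow_def)

lemma delta_pow_positive: "positive_word n (delta_pow n k)"
  using delta_positive[of 1 n n] by (auto simp: delta_pow_def positive_word_def)

lemma delta_pow_Suc: "delta_pow n (Suc k) = delta_pow n k @ delta n 1"
  using delta_pow_add[of n k 1] by (simp add: delta_pow_def)

lemma delta_pow_conjugation:
  "valid_band n g \<Longrightarrow> pos_equiv n (delta_pow n k @ [g]) ((rotate_band n 1 ^^ k) g # delta_pow n k)"
proof (induction k arbitrary: g)
  case 0
  then show ?case by (simp add: delta_pow_def)
next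
  case (Suc k)
  obtain t s where g: "g = (t, s)" by (cases g)
  have conj: "pos_equiv n (delta n 1 @ [g]) (rotate_band n 1 g # delta n 1)"
    using Suc.prems unfolding g by (intro delta_conjugation) (auto simp: valid_band_def)
  have "delta_pow n (Suc k) @ [g] = delta_pow n k @ delta n 1 @ [g]"
    by (simp add: delta_pow_Suc)
  also have "pos_equiv n \<dots> ((delta_pow n k @ [rotate_band n 1 g]) @ delta n 1)"
    using pos_equiv_append_left[OF conj] by simp
  also have "pos_equiv n \<dots> (((rotate_band n 1 ^^ k) (rotate_band n 1 g) # delta_pow n k) @ delta n 1)"
    using pos_equiv_append_right[OF Suc.IH[OF rotate_band_valid[OF Suc.prems]]] .
  also have "\<dots> = (rotate_band n 1 ^^ Suc k) g # delta_pow n (Suc k)"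
    by (simp add: delta_pow_Suc funpow_Suc_right del: funpow.simps)
  finally show ?case .
qed

text \<open>The endpoint x of a band after k rotations, for 1 \<le> x \<le> n and k \<le> n.\<close>

definition rotate_index :: "nat \<Rightarrow> nat \<Rightarrow> nat \<Rightarrow> nat" where
  "rotate_index n k x = (if k < x then x - k else x + n - k)"

lemma rotate_band_pow:
  assumes "valid_band n (t, s)" "k \<le> n"
  shows "(rotate_band n 1 ^^ k) (t, s)
    = (max (rotate_index n k t) (rotate_index n k s), min (rotate_index n k t) (rotate_index n k s))"
  using assms(2)
proof (induction k)
  case 0
  then show ?case using assms(1) by (auto simp: rotate_index_def valid_band_def)
next
  case (Suc k)
  define a where "a = rotate_index n k t"
  define b where "b = rotate_index n k s"
  have ab: "1 \<le> a" "a \<le> n" "1 \<le> b" "b \<le> n" "a \<noteq> b"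
    using assms(1) Suc.prems by (auto simp: a_def b_def rotate_index_def valid_band_def)
  have step: "rotate_index n (Suc k) t = (if 1 < a then a - 1 else n)"
    "rotate_index n (Suc k) s = (if 1 < b then b - 1 else n)"
    using assms(1) Suc.prems by (auto simp: a_def b_def rotate_index_def valid_band_def)
  have IH: "(rotate_band n 1 ^^ k) (t, s) = (max a b, min a b)"
    using Suc by (simp add: a_def b_def)
  show ?case
    unfolding funpow.simps comp_def IH step using ab
    by (auto simp: rotate_band_def max_def min_def)
qed

lemma rotate_band_pow_mult:
  assumes "valid_band n g"
  shows "(rotate_band n 1 ^^ (n * j)) g = g"
proof -
  have period: "(rotate_band n 1 ^^ n) g = g"
    using assms rotate_band_pow[of n "fst g" "snd g" n]
    by (cases g) (auto simp: rotate_index_def valid_band_def)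
  show ?thesis
    using period by (induction j) (simp_all add: funpow_add)
qed

text \<open>full_twist n j is \<Delta>^(2j) = \<delta>^(nj).\<close>

definition full_twist :: "nat \<Rightarrow> nat \<Rightarrow> band list" where
  "full_twist n j = delta_pow n (n * j)"

lemma full_twist_0 [simp]: "full_twist n 0 = []"
  by (simp add: full_twist_def delta_pow_def)

lemma full_twist_add: "full_twist n (i + j) = full_twist n i @ full_twist n j"
  by (simp add: full_twist_def add_mult_distrib2 delta_pow_add)

lemma full_twist_central:
  "positive_word n w \<Longrightarrow> pos_equiv n (full_twist n j @ w) (w @ full_twist n j)"
proof (induction w)
  case (Cons g w)
  then have g: "valid_band n g" "positive_word n w" by auto
  have "full_twist n j @ g # w = (full_twist n j @ [g]) @ w" by simp
  also have "pos_equiv n \<dots> ((g # full_twist n j) @ w)"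
    using pos_equiv_append_right[OF delta_pow_conjugation[OF g(1), of "n * j"]]
    unfolding full_twist_def rotate_band_pow_mult[OF g(1)] .
  also have "pos_equiv n \<dots> (g # w @ full_twist n j)"
    using pos_equiv_Cons[OF Cons.IH[OF g(2)]] by simp
  finally show ?case by simp
qed simp

lemma full_twist_left_divisible:
  assumes "1 \<le> i" "i < n"
  shows "\<exists>E. positive_word n E \<and> pos_equiv n ((Suc i, i) # E) (full_twist n 1)"
proof -
  define k where "k = n - 1 - i"
  have rot: "(rotate_band n 1 ^^ k) (n, n - 1) = (Suc i, i)"
    using assms rotate_band_pow[of n n "n - 1" k]
    by (auto simp: k_def rotate_index_def valid_band_def)
  have "full_twist n 1 = delta_pow n (k + 1 + (n - 1 - k))"
    using assms by (simp add: full_twist_def k_def)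
  also have "\<dots> = delta_pow n k @ delta n 1 @ delta_pow n (n - 1 - k)"
    by (simp only: delta_pow_add delta_pow_one append_assoc)
  also have "\<dots> = (delta_pow n k @ [(n, n - 1)]) @ delta (n - 1) 1 @ delta_pow n (n - 1 - k)"
    using assms by (simp add: delta_Cons)
  also have "pos_equiv n \<dots> ((Suc i, i) # delta_pow n k @ delta (n - 1) 1 @ delta_pow n (n - 1 - k))"
    using pos_equiv_append_right[OF delta_pow_conjugation[of n "(n, n - 1)" k]] rot assms
    by (simp add: valid_band_def)
  finally have "pos_equiv n ((Suc i, i) # delta_pow n k @ delta (n - 1) 1 @ delta_pow n (n - 1 - k))
      (full_twist n 1)"
    by (rule pos_equiv_sym)
  moreover have "positive_word n (delta_pow n k @ delta (n - 1) 1 @ delta_pow n (n - 1 - k))"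
    using delta_pow_positive delta_positive[of 1 "n - 1" n] by simp
  ultimately show ?thesis by blast
qed

section \<open>Artin words as fractions\<close>

text \<open>Since a_{i+1,i} \<cdot> twist_cofactor n i \<equiv> \<Delta>^2, the inverse of \<sigma>_i = a_{i+1,i} is
  \<Delta>^(-2) \<cdot> twist_cofactor n i.\<close>

definition twist_cofactor :: "nat \<Rightarrow> nat \<Rightarrow> band list" where
  "twist_cofactor n i =
    (SOME E. positive_word n E \<and> pos_equiv n ((Suc i, i) # E) (full_twist n 1))"

lemma twist_cofactor:
  assumes "1 \<le> i" "i < n"
  shows "positive_word n (twist_cofactor n i)"
    and "pos_equiv n ((Suc i, i) # twist_cofactor n i) (full_twist n 1)"
  using someI_ex[OF full_twist_left_divisible[OF assms]] unfolding twist_cofactor_def by blast+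

lemma twist_cofactor_right:
  assumes "1 \<le> i" "i < n"
  shows "pos_equiv n (twist_cofactor n i @ [(Suc i, i)]) (full_twist n 1)"
proof -
  have "pos_equiv n ((Suc i, i) # twist_cofactor n i @ [(Suc i, i)]) (full_twist n 1 @ [(Suc i, i)])"
    using pos_equiv_append_right[OF twist_cofactor(2)[OF assms]] by simp
  also have "pos_equiv n \<dots> ((Suc i, i) # full_twist n 1)"
    using full_twist_central[of n "[(Suc i, i)]" 1] assms by (simp add: valid_band_def)
  finally show ?thesis
    by (rule pos_equiv_Cons_cancel)
qed

text \<open>A pair (k, P) stands for the braid \<Delta>^(-2k) P; letters outside the range of
  generators act trivially.\<close>

fun act_letter :: "nat \<Rightarrow> aletter \<Rightarrow> nat \<times> band list \<Rightarrow> nat \<times> band list" where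
  "act_letter n (i, b) (k, P) =
    (if \<not> valid_aletter n (i, b) then (k, P)
     else if b then (k, P @ [(Suc i, i)])
     else (Suc k, P @ twist_cofactor n i))"

definition act_word :: "nat \<Rightarrow> aletter list \<Rightarrow> nat \<times> band list \<Rightarrow> nat \<times> band list" where
  "act_word n w s = fold (act_letter n) w s"

text \<open>Equality of \<Delta>^(-2k) P and \<Delta>^(-2m) Q after clearing denominators; the extra
  power j makes the relation transitive without appeal to cancellation.\<close>

fun frac_equiv :: "nat \<Rightarrow> nat \<times> band list \<Rightarrow> nat \<times> band list \<Rightarrow> bool" where
  "frac_equiv n (k, P) (m, Q) \<longleftrightarrow>
    (\<exists>j. pos_equiv n (full_twist n (m + j) @ P) (full_twist n (k + j) @ Q))"

lemma frac_equiv_refl: "frac_equiv n s s"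
  by (cases s) auto

lemma frac_equiv_sym: "frac_equiv n s s' \<Longrightarrow> frac_equiv n s' s"
  by (cases s; cases s') (auto intro: pos_equiv_sym)

lemma frac_equiv_trans [trans]:
  assumes "frac_equiv n s s'" "frac_equiv n s' s''"
  shows "frac_equiv n s s''"
proof -
  obtain k P m Q l R where s: "s = (k, P)" "s' = (m, Q)" "s'' = (l, R)"
    by (cases s; cases s'; cases s'')
  obtain i where i: "pos_equiv n (full_twist n (m + i) @ P) (full_twist n (k + i) @ Q)"
    using assms(1) s by auto
  obtain j where j: "pos_equiv n (full_twist n (l + j) @ Q) (full_twist n (m + j) @ R)"
    using assms(2) s by auto
  have "full_twist n (l + (m + i + j)) @ P = full_twist n (l + j) @ full_twist n (m + i) @ P"
    by (simp add: full_twist_add[symmetric] add_ac)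
  also have "pos_equiv n \<dots> (full_twist n (l + j) @ full_twist n (k + i) @ Q)"
    using pos_equiv_append_left[OF i] .
  also have "\<dots> = full_twist n (k + i) @ full_twist n (l + j) @ Q"
    by (simp add: full_twist_add[symmetric] add_ac)
  also have "pos_equiv n \<dots> (full_twist n (k + i) @ full_twist n (m + j) @ R)"
    using pos_equiv_append_left[OF j] .
  also have "\<dots> = full_twist n (k + (m + i + j)) @ R"
    by (simp add: full_twist_add[symmetric] add_ac)
  finally show ?thesis
    unfolding s by auto
qed

lemma frac_equiv_of_pos_equiv: "pos_equiv n P Q \<Longrightarrow> frac_equiv n (k, P) (k, Q)"
  by (auto intro!: exI[of _ 0] pos_equiv_append_left)

lemma frac_equiv_absorb_twist:
  assumes "pos_equiv n R (full_twist n 1)" "positive_word n P"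
  shows "frac_equiv n (Suc k, P @ R) (k, P)"
proof -
  have "pos_equiv n (full_twist n k @ P @ R) (full_twist n k @ P @ full_twist n 1)"
    using pos_equiv_append_left[OF assms(1), of "full_twist n k @ P"] by simp
  also have "pos_equiv n \<dots> (full_twist n k @ full_twist n 1 @ P)"
    using pos_equiv_append_left[OF pos_equiv_sym[OF full_twist_central[OF assms(2)]]] .
  also have "\<dots> = full_twist n (Suc k) @ P"
    using full_twist_add[of n k 1] by simp
  finally show ?thesis
    by (auto intro!: exI[of _ 0])
qed

lemma act_letter_resp:
  assumes "frac_equiv n s s'"
  shows "frac_equiv n (act_letter n x s) (act_letter n x s')"
proof -
  obtain k P m Q where s: "s = (k, P)" "s' = (m, Q)" by (cases s; cases s')
  obtain j where j: "pos_equiv n (full_twist n (m + j) @ P) (full_twist n (k + j) @ Q)"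
    using assms s by auto
  obtain i b where x: "x = (i, b)" by (cases x)
  have appended: "pos_equiv n (full_twist n (m + j) @ P @ R) (full_twist n (k + j) @ Q @ R)" for R
    using pos_equiv_append_right[OF j] by simp
  have "pos_equiv n (full_twist n (Suc m + j) @ P @ R) (full_twist n (Suc k + j) @ Q @ R)" for R
    using pos_equiv_append_left[OF appended, of "full_twist n 1"]
      full_twist_add[of n 1 "m + j"] full_twist_add[of n 1 "k + j"] by simp
  then show ?thesis
    using j appended unfolding s x by (auto intro!: exI[of _ j])
qed

lemma act_word_append: "act_word n (u @ v) s = act_word n v (act_word n u s)"
  by (simp add: act_word_def)

lemma act_word_resp: "frac_equiv n s s' \<Longrightarrow> frac_equiv n (act_word n w s) (act_word n w s')"
  unfolding act_word_def
proof (induction w arbitrary: s s')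
  case (Cons x w)
  then show ?case using Cons.IH[OF act_letter_resp[OF Cons.prems]] by simp
qed simp

lemma act_letter_positive:
  "positive_word n (snd s) \<Longrightarrow> positive_word n (snd (act_letter n x s))"
  by (cases s; cases x) (auto simp: valid_aletter_def valid_band_def twist_cofactor(1))

lemma act_word_positive:
  "positive_word n (snd s) \<Longrightarrow> positive_word n (snd (act_word n w s))"
  unfolding act_word_def
proof (induction w arbitrary: s)
  case (Cons x w)
  then show ?case using Cons.IH[OF act_letter_positive[OF Cons.prems]] by simp
qed simp

lemma act_word_sg:
  "\<forall>i\<in>set is. 1 \<le> i \<and> i < n \<Longrightarrow>
    act_word n (map sg is) (k, P) = (k, P @ map (\<lambda>i. (Suc i, i)) is)"
  unfolding act_word_def
  by (induction "is" arbitrary: P) (auto simp: sg_def valid_aletter_def)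

lemma act_word_sgi:
  "\<forall>i\<in>set is. 1 \<le> i \<and> i < n \<Longrightarrow>
    act_word n (map sgi is) (k, P) = (k + length is, P @ concat (map (twist_cofactor n) is))"
  unfolding act_word_def
  by (induction "is" arbitrary: k P) (auto simp: sgi_def valid_aletter_def)

lemma act_word_cancel:
  assumes "valid_aletter n x" "positive_word n P"
  shows "frac_equiv n (act_word n [x, ainv x] (k, P)) (k, P)"
proof -
  obtain i b where x: "x = (i, b)" by (cases x)
  have i: "1 \<le> i" "i < n" using assms(1) x by (auto simp: valid_aletter_def)
  show ?thesis
  proof (cases b)
    case True
    then show ?thesis
      using frac_equiv_absorb_twist[OF twist_cofactor(2)[OF i] assms(2)] x assms(1)
      by (simp add: act_word_def valid_aletter_def)
  next
    case False
    then show ?thesis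
      using frac_equiv_absorb_twist[OF twist_cofactor_right[OF i] assms(2)] x assms(1)
      by (simp add: act_word_def valid_aletter_def)
  qed
qed

lemma band_braid_relation:
  assumes "1 \<le> i" "Suc i < n"
  shows "pos_equiv n [(Suc i, i), (Suc (Suc i), Suc i), (Suc i, i)]
    [(Suc (Suc i), Suc i), (Suc i, i), (Suc (Suc i), Suc i)]"
proof -
  have "pos_equiv n [(Suc (Suc i), Suc i), (Suc i, i), (Suc (Suc i), Suc i)]
      [(Suc i, i), (Suc (Suc i), i), (Suc (Suc i), Suc i)]"
    using pos_equiv_Cons2[OF R2c_equiv] assms by simp
  also have "pos_equiv n \<dots> [(Suc i, i), (Suc (Suc i), Suc i), (Suc i, i)]"
    using pos_equiv_Cons[OF pos_equiv_sym[OF R2a_equiv]] assms by simp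
  finally show ?thesis
    by (rule pos_equiv_sym)
qed

lemma braid_eq_act_word:
  "braid_eq n u v \<Longrightarrow> positive_word n (snd s) \<Longrightarrow> frac_equiv n (act_word n u s) (act_word n v s)"
proof (induction arbitrary: s rule: braid_eq.induct)
  case (refl w)
  show ?case by (rule frac_equiv_refl)
next
  case (sym u v)
  then show ?case by (blast intro: frac_equiv_sym)
next
  case (trans u v w)
  then show ?case by (blast intro: frac_equiv_trans)
next
  case (ctx u v p q)
  then have "frac_equiv n (act_word n u (act_word n p s)) (act_word n v (act_word n p s))"
    using act_word_positive by blast
  then show ?case
    unfolding act_word_append by (rule act_word_resp)
next
  case (cancel x)
  then show ?case
    using act_word_cancel[of n x "snd s" "fst s"] by (simp add: act_word_def)
next
  case (comm i j)
  then have "pos_equiv n [(Suc i, i), (Suc j, j)] [(Suc j, j), (Suc i, i)]"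
    by (intro R1_equiv) (auto simp: valid_band_def)
  then show ?case
    using comm.hyps act_word_sg[of "[i, j]" n] act_word_sg[of "[j, i]" n]
    by (cases s) (auto intro: frac_equiv_of_pos_equiv pos_equiv_append_left)
next
  case (braid i)
  then show ?case
    using band_braid_relation[of i n] act_word_sg[of "[i, Suc i, i]" n] act_word_sg[of "[Suc i, i, Suc i]" n]
    by (cases s) (auto intro: frac_equiv_of_pos_equiv pos_equiv_append_left)
qed

lemma delta_twist_cofactors:
  "1 \<le> l \<Longrightarrow> l \<le> h \<Longrightarrow> h \<le> n \<Longrightarrow>
    pos_equiv n (delta h l @ concat (map (twist_cofactor n) [l..<h])) (full_twist n (h - l))"
proof (induction "h - l" arbitrary: l rule: less_induct)
  case less
  show ?case
  proof (cases "l = h")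
    case True
    then show ?thesis by (simp add: delta_empty full_twist_def delta_pow_def)
  next
    case False
    then have lh: "l < h" using less.prems by simp
    let ?E = "concat (map (twist_cofactor n) [Suc l..<h])"
    have IH: "pos_equiv n (delta h (Suc l) @ ?E) (full_twist n (h - Suc l))"
      using less.hyps[of "Suc l"] less.prems lh by simp
    have "delta h l @ concat (map (twist_cofactor n) [l..<h])
        = delta h (Suc l) @ ((Suc l, l) # twist_cofactor n l) @ ?E"
      using delta_snoc[OF lh] upt_rec[of l h] lh by simp
    also have "pos_equiv n \<dots> (delta h (Suc l) @ full_twist n 1 @ ?E)"
      using pos_equiv_append_context[OF twist_cofactor(2)] less.prems lh by simp
    also have "pos_equiv n \<dots> (full_twist n 1 @ delta h (Suc l) @ ?E)"
      using pos_equiv_append_right[OF pos_equiv_sym[OF full_twist_central[OF delta_positive]]]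
        less.prems by simp
    also have "pos_equiv n \<dots> (full_twist n 1 @ full_twist n (h - Suc l))"
      using pos_equiv_append_left[OF IH] .
    also have "\<dots> = full_twist n (h - l)"
      using lh by (simp add: full_twist_add[symmetric] Suc_diff_Suc)
    finally show ?thesis .
  qed
qed

lemma act_band_word:
  assumes g: "valid_band n g" and P: "positive_word n P"
  shows "frac_equiv n (act_word n (band_word g) (k, P)) (k, P @ [g])"
proof -
  obtain t s where ts: "g = (t, s)" "1 \<le> s" "s < t" "t \<le> n"
    using g by (cases g) (auto simp: valid_band_def)
  let ?E = "concat (map (twist_cofactor n) [Suc s..<t])"
  have "band_word g = map sg (rev [Suc s..<t]) @ [sg s] @ map sgi [Suc s..<t]"
    using ts by (simp add: band_word_def)
  then have "act_word n (band_word g) (k, P) = (k + (t - Suc s), P @ delta t s @ ?E)"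
    using ts act_word_sg[of "rev [Suc s..<t]" n] act_word_sg[of "[s]" n] act_word_sgi[of "[Suc s..<t]" n]
    by (simp only: act_word_append) (simp add: delta_snoc, simp add: delta_def)
  also have "frac_equiv n \<dots> (k + (t - Suc s), P @ [g] @ full_twist n (t - Suc s))"
  proof (rule frac_equiv_of_pos_equiv, rule pos_equiv_append_left)
    have "pos_equiv n (delta t s @ ?E) ((t, s) # delta t (Suc s) @ ?E)"
      using pos_equiv_append_right[OF delta_left_factor] ts by simp
    also have "pos_equiv n \<dots> ((t, s) # full_twist n (t - Suc s))"
      using pos_equiv_Cons[OF delta_twist_cofactors] ts by simp
    finally show "pos_equiv n (delta t s @ ?E) ([g] @ full_twist n (t - Suc s))"
      using ts by simp
  qed
  also have "frac_equiv n \<dots> (k, P @ [g])"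
  proof -
    have "pos_equiv n (full_twist n k @ (P @ [g]) @ full_twist n (t - Suc s))
        (full_twist n k @ full_twist n (t - Suc s) @ P @ [g])"
      using pos_equiv_append_left[OF pos_equiv_sym[OF full_twist_central[of n "P @ [g]"]]] g P
      by simp
    then show ?thesis
      by (auto intro!: exI[of _ 0] simp: full_twist_add)
  qed
  finally show ?thesis .
qed

lemma act_band_to_artin:
  "positive_word n V \<Longrightarrow> positive_word n P \<Longrightarrow>
    frac_equiv n (act_word n (band_to_artin V) (k, P)) (k, P @ V)"
proof (induction V arbitrary: P)
  case Nil
  then show ?case by (simp add: band_to_artin_def act_word_def frac_equiv_refl)
next
  case (Cons g V)
  obtain m Q where mQ: "act_word n (band_word g) (k, P) = (m, Q)"
    by (cases "act_word n (band_word g) (k, P)")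
  have "act_word n (band_to_artin (g # V)) (k, P) = act_word n (band_to_artin V) (m, Q)"
    by (simp add: band_to_artin_def act_word_append mQ)
  also have "frac_equiv n \<dots> (act_word n (band_to_artin V) (k, P @ [g]))"
  proof (rule act_word_resp)
    show "frac_equiv n (m, Q) (k, P @ [g])"
      using act_band_word[of n g P k] Cons.prems unfolding mQ by simp
  qed
  also have "frac_equiv n \<dots> (k, P @ g # V)"
    using Cons.IH[of "P @ [g]"] Cons.prems by simp
  finally show ?case .
qed

theorem theorem2p6:
  fixes n :: nat and V W :: "(nat \<times> nat) list"
  assumes "positive_word n V" and "positive_word n W"
    and "braid_eq n (band_to_artin V) (band_to_artin W)"
  shows "pos_equiv n V W"
proof -
  have "frac_equiv n (0, V) (act_word n (band_to_artin V) (0, []))"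
    using frac_equiv_sym[OF act_band_to_artin[OF assms(1) positive_word_Nil]] by simp
  also have "frac_equiv n \<dots> (act_word n (band_to_artin W) (0, []))"
    using braid_eq_act_word[OF assms(3)] by simp
  also have "frac_equiv n \<dots> (0, W)"
    using act_band_to_artin[OF assms(2) positive_word_Nil] by simp
  finally obtain j where "pos_equiv n (full_twist n j @ V) (full_twist n j @ W)"
    by auto
  then show ?thesis
    by (rule pos_equiv_append_cancel_left)
qed

end
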